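(* Let $n$ be even and $f,g:\mathbb{F}_2^n\to\mathbb{F}_2$ bent functions with $g(\mathbf{x})=f(\mathbf{x}\oplus\mathbf{b})\oplus\mathbf{c}\cdot\mathbf{x}\oplus d$ for all $\mathbf{x}$, where $\mathbf{b},\mathbf{c}\in\mathbb{F}_2^n$, $d\in\mathbb{F}_2$. Let $\tilde f$ be the dual of $f$. Starting from $\ket{0^n}$ and applying in order $\mathrm{H}^{\otimes n}$, $U_g$, $\mathrm{H}^{\otimes n}$, $U_{\tilde f}$, $\mathrm{H}^{\otimes n}$, the state before measurement is $$(-1)^{\mathbf{b}\cdot\mathbf{c}\oplus d}\,2^{-n}\sum_{\mathbf{y},\mathbf{z}\in\mathbb{F}_2^n}(-1)^{\tilde f(\mathbf{y}\oplus\mathbf{c})\oplus\tilde f(\mathbf{y})\oplus\mathbf{y}\cdot(\mathbf{z}\oplus\mathbf{b})}\ket{\mathbf{z}},$$ and the probability of observing $\mathbf{z}\in\mathbb{F}_2^n$ upon measurement is $2^{-2n}\left|\sum_{\mathbf{y}\in\mathbb{F}_2^n}(-1)^{\tilde f(\mathbf{y}\oplus\mathbf{c})\oplus\tilde f(\mathbf{y})\oplus\mathbf{y}\cdot(\mathbf{z}\oplus\mathbf{b})}\right|^2$.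
   Context: $\mathbf{x}\cdot\mathbf{y}=\bigoplus_ix_iy_i$. Walsh–Hadamard transform: $W_f(\boldsymbol{\omega})=2^{-n/2}\sum_{\mathbf{x}}(-1)^{f(\mathbf{x})\oplus\mathbf{x}\cdot\boldsymbol{\omega}}$. $f$ is bent if $W_f(\boldsymbol{\omega})=\pm1$ for all $\boldsymbol{\omega}$; its dual $\tilde f$ is the Boolean function with $(-1)^{\tilde f(\mathbf{x})}=W_f(\mathbf{x})$. $\mathrm{H}$ is the Hadamard gate and $U_h$ the phase oracle $\ket{\mathbf{x}}\mapsto(-1)^{h(\mathbf{x})}\ket{\mathbf{x}}$. *)

theory Defs
  imports Complex_Main
begin

(* Vectors of F_2^n are boolean lists of length n; F_2 is bool, with XOR being (\<noteq>). *)

definition vecs :: "nat \<Rightarrow> bool list set" where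
  "vecs n = {xs. length xs = n}"

definition bxor :: "bool list \<Rightarrow> bool list \<Rightarrow> bool list" where
  "bxor xs ys = map2 (\<noteq>) xs ys"

definition dot :: "bool list \<Rightarrow> bool list \<Rightarrow> bool" where
  "dot xs ys = odd (card {i. i < length xs \<and> i < length ys \<and> xs ! i \<and> ys ! i})"

definition sgnb :: "bool \<Rightarrow> 'a::{one,uminus}" where
  "sgnb b = (if b then - 1 else 1)"

definition walsh :: "nat \<Rightarrow> (bool list \<Rightarrow> bool) \<Rightarrow> bool list \<Rightarrow> real" where
  "walsh n f w = (1 / sqrt (2 ^ n)) * (\<Sum>x\<in>vecs n. sgnb (f x \<noteq> dot x w))"

definition bent :: "nat \<Rightarrow> (bool list \<Rightarrow> bool) \<Rightarrow> bool" where
  "bent n f \<longleftrightarrow> (\<forall>w\<in>vecs n. walsh n f w = 1 \<or> walsh n f w = - 1)"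

definition is_dual :: "nat \<Rightarrow> (bool list \<Rightarrow> bool) \<Rightarrow> (bool list \<Rightarrow> bool) \<Rightarrow> bool" where
  "is_dual n f ft \<longleftrightarrow> (\<forall>x\<in>vecs n. sgnb (ft x) = walsh n f x)"

(* n-qubit states: amplitude functions on computational basis vectors (only values on vecs n matter). *)
type_synonym state = "bool list \<Rightarrow> complex"

definition ket0 :: "nat \<Rightarrow> state" where
  "ket0 n = (\<lambda>x. if x = replicate n False then 1 else 0)"

definition hadn :: "nat \<Rightarrow> state \<Rightarrow> state" where
  "hadn n \<psi> = (\<lambda>z. complex_of_real (1 / sqrt (2 ^ n)) * (\<Sum>x\<in>vecs n. sgnb (dot x z) * \<psi> x))"

definition phase_op :: "(bool list \<Rightarrow> bool) \<Rightarrow> state \<Rightarrow> state" where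
  "phase_op h \<psi> = (\<lambda>x. sgnb (h x) * \<psi> x)"

definition meas_prob :: "state \<Rightarrow> bool list \<Rightarrow> real" where
  "meas_prob \<psi> z = (cmod (\<psi> z))\<^sup>2"

end

theory Submission
  imports Defs
begin

text \<open>
  The first two gates prepare the uniform superposition with phases (-1)^g, and a Hadamard
  layer turns these phases into Walsh coefficients, giving the state 2^(-n/2) W_g.
  Substituting x = u + b in the Walsh sum gives W_g(y) = (-1)^(b.c + d + b.y) W_f(y + c), and
  by duality W_f(y + c) = (-1)^(ft(y + c)).
\<close>

lemma finite_vecs: "finite (vecs n)"
proof -
  have "vecs n = {xs. set xs \<subseteq> (UNIV :: bool set) \<and> length xs = n}"
    by (auto simp: vecs_def)
  then show ?thesis
    using finite_lists_length_eq[of "UNIV :: bool set" n] by simp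
qed

lemma length_bxor [simp]: "length (bxor x y) = min (length x) (length y)"
  by (simp add: bxor_def)

lemma nth_bxor: "i < length x \<Longrightarrow> i < length y \<Longrightarrow> bxor x y ! i = (x ! i \<noteq> y ! i)"
  by (simp add: bxor_def)

lemma bxor_in_vecs: "x \<in> vecs n \<Longrightarrow> y \<in> vecs n \<Longrightarrow> bxor x y \<in> vecs n"
  by (simp add: vecs_def)

lemma bxor_bxor_cancel: "length x = length y \<Longrightarrow> bxor (bxor x y) y = x"
  by (rule nth_equalityI) (auto simp: nth_bxor)

lemma dot_conv_filter: "dot xs ys = odd (length (filter (\<lambda>(a, b). a \<and> b) (zip xs ys)))"
  unfolding dot_def length_filter_conv_card by (rule arg_cong[where f = "\<lambda>S. odd (card S)"]) auto

lemma dot_commute: "dot x y = dot y x"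
  unfolding dot_def by (metis (no_types, lifting) Collect_cong)

lemma dot_replicate_False: "dot (replicate n False) z = False"
  by (simp add: dot_def cong: conj_cong)

lemma dot_bxor_left:
  assumes "length x = length y" and "length y = length z"
  shows "dot (bxor x y) z = (dot x z \<noteq> dot y z)"
  using assms by (induction x y z rule: list_induct3) (auto simp: bxor_def dot_conv_filter)

lemma dot_bxor_right:
  "length x = length y \<Longrightarrow> length y = length z \<Longrightarrow> dot z (bxor x y) = (dot z x \<noteq> dot z y)"
  using dot_bxor_left by (simp add: dot_commute)

lemma sgnb_xor: "sgnb (a \<noteq> b) = (sgnb a * sgnb b :: 'a::comm_ring_1)"
  by (simp add: sgnb_def)

lemma of_real_sgnb: "of_real (sgnb a) = (sgnb a :: 'a::real_algebra_1)"
  by (simp add: sgnb_def)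

lemma norm_sgnb [simp]: "norm (sgnb a :: 'a::real_normed_algebra_1) = 1"
  by (simp add: sgnb_def)

lemma sum_vecs_translate:
  "b \<in> vecs n \<Longrightarrow> (\<Sum>x\<in>vecs n. h x) = (\<Sum>u\<in>vecs n. h (bxor u b))"
  by (rule sum.reindex_bij_witness[where i = "\<lambda>x. bxor x b" and j = "\<lambda>x. bxor x b"])
    (auto simp: bxor_in_vecs bxor_bxor_cancel vecs_def)

lemma hadn_ket0: "hadn n (ket0 n) = (\<lambda>z. complex_of_real (1 / sqrt (2 ^ n)))"
proof
  fix z
  have "(\<Sum>x\<in>vecs n. sgnb (dot x z) * ket0 n x)
      = (\<Sum>x\<in>vecs n. if x = replicate n False then sgnb (dot x z) else 0 :: complex)"
    by (rule sum.cong) (auto simp: ket0_def)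
  also have "\<dots> = sgnb (dot (replicate n False) z)"
    using finite_vecs[of n] by (simp add: vecs_def)
  finally have "(\<Sum>x\<in>vecs n. sgnb (dot x z) * ket0 n x) = (1 :: complex)"
    by (simp add: dot_replicate_False sgnb_def)
  then show "hadn n (ket0 n) z = complex_of_real (1 / sqrt (2 ^ n))"
    by (simp add: hadn_def)
qed

lemma hadn_phase_op_signs:
  assumes "\<forall>y\<in>vecs n. \<psi> y = a * sgnb (s y)"
  shows "hadn n (phase_op h \<psi>) z
    = a * complex_of_real (1 / sqrt (2 ^ n)) * (\<Sum>y\<in>vecs n. sgnb ((h y \<noteq> s y) \<noteq> dot y z))"
proof -
  have "(\<Sum>y\<in>vecs n. sgnb (dot y z) * (sgnb (h y) * \<psi> y))
      = a * (\<Sum>y\<in>vecs n. sgnb ((h y \<noteq> s y) \<noteq> dot y z))"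
    unfolding sum_distrib_left using assms by (intro sum.cong) (simp_all add: sgnb_def)
  then show ?thesis
    unfolding hadn_def phase_op_def by (simp add: mult_ac)
qed

lemma hadn_phase_op_const:
  "hadn n (phase_op h (\<lambda>_. a)) = (\<lambda>w. a * complex_of_real (walsh n h w))"
proof
  fix w
  have "hadn n (phase_op h (\<lambda>_. a)) w
      = a * complex_of_real (1 / sqrt (2 ^ n)) * (\<Sum>y\<in>vecs n. sgnb (h y \<noteq> dot y w))"
    using hadn_phase_op_signs[of n "\<lambda>_. a" a "\<lambda>_. False"] by (simp add: sgnb_def)
  then show "hadn n (phase_op h (\<lambda>_. a)) w = a * complex_of_real (walsh n h w)"
    by (simp add: walsh_def of_real_sgnb)
qed

lemma walsh_translate_modulate:
  assumes b: "b \<in> vecs n" and c: "c \<in> vecs n" and w: "w \<in> vecs n"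
    and g: "\<forall>x\<in>vecs n. g x = ((f (bxor x b) \<noteq> dot c x) \<noteq> d)"
  shows "walsh n g w = sgnb ((dot b c \<noteq> d) \<noteq> dot b w) * walsh n f (bxor w c)"
proof -
  have "(\<Sum>x\<in>vecs n. sgnb (g x \<noteq> dot x w))
      = (\<Sum>u\<in>vecs n. sgnb (g (bxor u b) \<noteq> dot (bxor u b) w) :: real)"
    by (rule sum_vecs_translate[OF b])
  also have "\<dots> = (\<Sum>u\<in>vecs n. sgnb ((dot b c \<noteq> d) \<noteq> dot b w) * sgnb (f u \<noteq> dot u (bxor w c)))"
  proof (rule sum.cong[OF refl])
    fix u assume u: "u \<in> vecs n"
    then have len: "length u = n" "length b = n" "length c = n" "length w = n"
      using b c w by (auto simp: vecs_def)
    have "(g (bxor u b) \<noteq> dot (bxor u b) w) = (((dot b c \<noteq> d) \<noteq> dot b w) \<noteq> (f u \<noteq> dot u (bxor w c)))"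
      using g bxor_in_vecs[OF u b] len
      by (auto simp: bxor_bxor_cancel dot_bxor_left dot_bxor_right dot_commute[of c])
    then show "sgnb (g (bxor u b) \<noteq> dot (bxor u b) w)
        = sgnb ((dot b c \<noteq> d) \<noteq> dot b w) * (sgnb (f u \<noteq> dot u (bxor w c)) :: real)"
      by (simp only: sgnb_xor)
  qed
  finally show ?thesis
    by (simp add: walsh_def sum_distrib_left)
qed

theorem theorem11:
  fixes n :: nat and f g ft :: "bool list \<Rightarrow> bool" and b c :: "bool list" and d :: bool
  assumes "even n"
    and "bent n f" and "bent n g"
    and "b \<in> vecs n" and "c \<in> vecs n"
    and "\<forall>x\<in>vecs n. g x = ((f (bxor x b) \<noteq> dot c x) \<noteq> d)"
    and "is_dual n f ft"
  shows "(\<forall>z\<in>vecs n.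
           hadn n (phase_op ft (hadn n (phase_op g (hadn n (ket0 n))))) z
           = sgnb (dot b c \<noteq> d) * complex_of_real (1 / 2 ^ n) *
             (\<Sum>y\<in>vecs n. sgnb ((ft (bxor y c) \<noteq> ft y) \<noteq> dot y (bxor z b)))) \<and>
         (\<forall>z\<in>vecs n.
           meas_prob (hadn n (phase_op ft (hadn n (phase_op g (hadn n (ket0 n)))))) z
           = (1 / 2 ^ (2 * n)) *
             (cmod (\<Sum>y\<in>vecs n. sgnb ((ft (bxor y c) \<noteq> ft y) \<noteq> dot y (bxor z b)) :: complex))\<^sup>2)"
proof -
  let ?a = "complex_of_real (1 / sqrt (2 ^ n))"
  let ?e = "dot b c \<noteq> d"
  let ?S = "\<lambda>z. \<Sum>y\<in>vecs n. sgnb ((ft (bxor y c) \<noteq> ft y) \<noteq> dot y (bxor z b)) :: complex"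
  have walsh_g: "walsh n g y = sgnb ((?e \<noteq> dot b y) \<noteq> ft (bxor y c))" if "y \<in> vecs n" for y
  proof -
    have "walsh n f (bxor y c) = sgnb (ft (bxor y c))"
      using assms(7) bxor_in_vecs[OF that assms(5)] by (simp add: is_dual_def)
    then show ?thesis
      using walsh_translate_modulate[OF assms(4,5) that assms(6)] by (simp add: sgnb_def)
  qed
  have state: "\<forall>y\<in>vecs n. hadn n (phase_op g (hadn n (ket0 n))) y
      = ?a * sgnb ((?e \<noteq> dot b y) \<noteq> ft (bxor y c))"
    by (simp add: hadn_ket0 hadn_phase_op_const walsh_g of_real_sgnb)
  have final: "hadn n (phase_op ft (hadn n (phase_op g (hadn n (ket0 n))))) z
      = sgnb ?e * complex_of_real (1 / 2 ^ n) * ?S z" if z: "z \<in> vecs n" for z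
  proof -
    have "(\<Sum>y\<in>vecs n. sgnb ((ft y \<noteq> ((?e \<noteq> dot b y) \<noteq> ft (bxor y c))) \<noteq> dot y z))
        = (\<Sum>y\<in>vecs n. sgnb ?e * sgnb ((ft (bxor y c) \<noteq> ft y) \<noteq> dot y (bxor z b)) :: complex)"
      using z assms(4) by (intro sum.cong) (auto simp: vecs_def dot_bxor_right dot_commute sgnb_def)
    moreover have "?a * ?a = complex_of_real (1 / 2 ^ n)"
      by (simp flip: of_real_mult)
    ultimately show ?thesis
      by (simp add: hadn_phase_op_signs[OF state] sum_distrib_left mult_ac)
  qed
  moreover have "meas_prob (hadn n (phase_op ft (hadn n (phase_op g (hadn n (ket0 n)))))) z
      = (1 / 2 ^ (2 * n)) * (cmod (?S z))\<^sup>2" if "z \<in> vecs n" for z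
    by (simp add: meas_prob_def final[OF that] norm_mult norm_divide norm_power power_divide
        mult.commute flip: power_mult)
  ultimately show ?thesis by blast
qed

end
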